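(* Let $m$ be a positive integer and $p$ a prime, and let $\mathcal B\subset\mathbb F_p$ be as defined below. Then for any subset $B\subset\mathcal B$ with $|B|>p^{1/4}$ we have $|B-B|\ge p^{\beta/5}|B|$.
   Context: Set $\beta=1/(16m^2)$, $r=\lfloor\beta\log p/\log2\rfloor$, $M=2^{16m^2-1}$, and $\mathcal B=\left\{\sum_{j=1}^r x_j(2M)^{j-1}:\ x_1,\dots,x_r\in\{0,\dots,M-1\}\right\}$, viewed as a subset of $\mathbb F_p$ (all these integers are at most $p/2$). $B-B=\{b-b':b,b'\in B\}$ in $\mathbb F_p$. *)

theory Defs
  imports "HOL-Computational_Algebra.Primes" Complex_Main
begin

definition beta :: "nat \<Rightarrow> real" where
  "beta m = 1 / (16 * real m ^ 2)"

definition rpar :: "nat \<Rightarrow> nat \<Rightarrow> nat" where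
  "rpar m p = nat \<lfloor>beta m * ln (real p) / ln 2\<rfloor>"

definition Mpar :: "nat \<Rightarrow> nat" where
  "Mpar m = 2 ^ (16 * m ^ 2 - 1)"

text \<open>The set calB, as integers (all lie in [0, p/2], so they represent distinct
  residues mod p). Index j ranges over 0..r-1, corresponding to (2M)^(j-1) for j = 1..r.\<close>
definition calB :: "nat \<Rightarrow> nat \<Rightarrow> int set" where
  "calB m p = {(\<Sum>j<rpar m p. int (x j) * (2 * int (Mpar m)) ^ j) | x.
                 \<forall>j<rpar m p. x j < Mpar m}"

definition diffset_mod :: "nat \<Rightarrow> int set \<Rightarrow> int set" where
  "diffset_mod p B = {(b - b') mod int p | b b'. b \<in> B \<and> b' \<in> B}"

end

theory Submission
  imports Defs "HOL-Analysis.Convex"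
begin

text \<open>
  The elements of \<open>calB m p\<close> are the integers with \<open>r\<close> digits in base \<open>2M\<close>, every digit lying in
  \<open>[0, M)\<close>. They lie in \<open>[0, p/2)\<close>, so reduction modulo \<open>p\<close> is injective on \<open>B - B\<close> and the
  difference set may be computed in \<open>\<int>\<close>. There we show, by induction on the number of digits, that
  \<open>|A - B| \<ge> (|A| |B|)^((1+d)/2)\<close> with \<open>d = 1/(20 m\<^sup>2)\<close>. Split \<open>A\<close> and \<open>B\<close> by their lowest digit
  into fibres of sizes \<open>a s\<close> and \<open>b t\<close>: the difference sets of fibre pairs belonging to distinct
  differences \<open>D = s - t\<close> of lowest digits lie in distinct residue classes modulo \<open>2M\<close>, so by
  induction \<open>|A - B| \<ge> \<Sum>\<^sub>D max {(a s b t)^((1+d)/2) | s - t = D}\<close>. This sum dominates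
  \<open>(\<Sum> a s \<Sum> b t)^((1+d)/2)\<close> by a weighted Cauchy-Davenport inequality for the digit sets combined
  with Hoelder's inequality; the latter costs a factor \<open>|S|^d \<le> M^d \<le> 7/4\<close>, which is absorbed
  because \<open>w^8 (2 - w) \<ge> 1\<close> on \<open>[1, 7/4]\<close>.
  Finally \<open>|B|^d \<ge> p^(d/4) = p^(\<beta>/5)\<close>.
\<close>

section \<open>Inequalities for real sums\<close>

lemma Holder_sum_powr:
  fixes f g :: "'a \<Rightarrow> real"
  assumes fin: "finite I" and ne: "I \<noteq> {}" and pos: "\<And>i. i \<in> I \<Longrightarrow> f i > 0 \<and> g i > 0"
    and l: "0 \<le> l" "l \<le> 1"
  shows "(\<Sum>i\<in>I. f i powr l * g i powr (1 - l)) \<le> (\<Sum>i\<in>I. f i) powr l * (\<Sum>i\<in>I. g i) powr (1 - l)"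
proof -
  define F where "F = (\<Sum>i\<in>I. f i)"
  define G where "G = (\<Sum>i\<in>I. g i)"
  have F: "F > 0" unfolding F_def using fin ne pos by (intro sum_pos) auto
  have G: "G > 0" unfolding G_def using fin ne pos by (intro sum_pos) auto
  have "f i powr l * g i powr (1 - l) \<le> F powr l * G powr (1 - l) * (l * (f i / F) + (1 - l) * (g i / G))"
    if i: "i \<in> I" for i
  proof -
    have "(f i / F) powr l * (g i / G) powr (1 - l) \<le> l * (f i / F) + (1 - l) * (g i / G)"
      using Youngs_inequality_0[of l "1 - l" "f i / F" "g i / G"] l pos[OF i] F G by auto
    moreover have "f i powr l * g i powr (1 - l) = F powr l * G powr (1 - l) * ((f i / F) powr l * (g i / G) powr (1 - l))"
      using pos[OF i] F G by (simp add: powr_divide)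
    ultimately show ?thesis using F G by (simp add: mult_left_mono)
  qed
  hence "(\<Sum>i\<in>I. f i powr l * g i powr (1 - l)) \<le> (\<Sum>i\<in>I. F powr l * G powr (1 - l) * (l * (f i / F) + (1 - l) * (g i / G)))"
    by (intro sum_mono) auto
  also have "\<dots> = F powr l * G powr (1 - l) * (l * (\<Sum>i\<in>I. f i) / F + (1 - l) * (\<Sum>i\<in>I. g i) / G)"
    by (simp add: sum_distrib_left sum.distrib sum_divide_distrib[symmetric] algebra_simps)
  also have "\<dots> = F powr l * G powr (1 - l)"
    using F G by (simp add: F_def[symmetric] G_def[symmetric])
  finally show ?thesis by (simp add: F_def G_def)
qed

lemma power_mean_sum_powr:
  fixes a :: "'a \<Rightarrow> real"
  assumes fin: "finite S" and ne: "S \<noteq> {}" and pos: "\<And>s. s \<in> S \<Longrightarrow> a s > 0" and d: "0 < d"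
  shows "(\<Sum>s\<in>S. a s) powr (1 + d) \<le> real (card S) powr d * (\<Sum>s\<in>S. a s powr (1 + d))"
proof -
  define l where "l = 1 / (1 + d)"
  have l: "0 \<le> l" "l \<le> 1" using d by (auto simp: l_def)
  have "(\<Sum>s\<in>S. (a s powr (1 + d)) powr l * 1 powr (1 - l))
      \<le> (\<Sum>s\<in>S. a s powr (1 + d)) powr l * (\<Sum>s\<in>S. (1::real)) powr (1 - l)"
    by (rule Holder_sum_powr[OF fin ne _ l]) (use pos in fastforce)
  moreover have "(a s powr (1 + d)) powr l * 1 powr (1 - l) = a s" if "s \<in> S" for s
    using pos[OF that] d by (simp add: powr_powr l_def)
  ultimately have h: "(\<Sum>s\<in>S. a s) \<le> (\<Sum>s\<in>S. a s powr (1 + d)) powr l * real (card S) powr (1 - l)"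
    by simp
  have "(\<Sum>s\<in>S. a s) powr (1 + d) \<le> ((\<Sum>s\<in>S. a s powr (1 + d)) powr l * real (card S) powr (1 - l)) powr (1 + d)"
    using h d pos by (intro powr_mono2) (auto intro: sum_nonneg less_imp_le)
  also have "\<dots> = (\<Sum>s\<in>S. a s powr (1 + d)) * real (card S) powr d"
  proof -
    have "(1 - l) * (1 + d) = d" "l * (1 + d) = 1" using d by (auto simp: l_def field_simps)
    moreover have "0 \<le> (\<Sum>s\<in>S. a s powr (1 + d))" by (intro sum_nonneg) auto
    ultimately show ?thesis by (simp add: powr_mult powr_powr)
  qed
  finally show ?thesis by (simp add: mult.commute)
qed

lemma Lyapunov_sum_powr:
  fixes a :: "'a \<Rightarrow> real"
  assumes fin: "finite S" and ne: "S \<noteq> {}" and pos: "\<And>s. s \<in> S \<Longrightarrow> a s > 0" and d: "0 < d" "d < 1"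
  shows "(\<Sum>s\<in>S. a s) \<le> (\<Sum>s\<in>S. a s powr ((1 + d) / 2)) powr (2 * d / (1 + d))
                            * (\<Sum>s\<in>S. a s powr (1 + d)) powr (1 - 2 * d / (1 + d))"
proof -
  define l where "l = 2 * d / (1 + d)"
  have l: "0 \<le> l" "l \<le> 1" using d by (auto simp: l_def)
  have "(\<Sum>s\<in>S. (a s powr ((1 + d) / 2)) powr l * (a s powr (1 + d)) powr (1 - l))
      \<le> (\<Sum>s\<in>S. a s powr ((1 + d) / 2)) powr l * (\<Sum>s\<in>S. a s powr (1 + d)) powr (1 - l)"
    by (rule Holder_sum_powr[OF fin ne _ l]) (use pos in fastforce)
  moreover have "(a s powr ((1 + d) / 2)) powr l * (a s powr (1 + d)) powr (1 - l) = a s" if "s \<in> S" for s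
  proof -
    have "(1 + d) / 2 * l + (1 + d) * (1 - l) = 1"
      using d by (simp add: l_def field_simps) (smt (verit) mult_pos_pos)
    thus ?thesis using pos[OF that] by (simp add: powr_powr flip: powr_add)
  qed
  ultimately show ?thesis by (simp add: l_def)
qed

lemma Lyapunov_small_moment_bound:
  fixes A B F P d :: real
  assumes A: "1 \<le> A" and B: "1 \<le> B" and F: "0 \<le> F" and P: "0 \<le> P" and d: "0 < d" "d < 1"
    and interpolation: "A \<le> P powr (2 * d / (1 + d)) * F powr (1 - 2 * d / (1 + d))"
    and small: "P < (A * B) powr ((1 + d) / 2)"
  shows "A powr (1 + d) \<le> (B powr (1 + d)) powr (d / (1 - d)) * F"
proof -
  define l where "l = 2 * d / (1 + d)"
  define e where "e = (1 + d) / (1 - d)"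
  have l: "0 < l" "(1 + d) * l / 2 = d" "1 - l = (1 - d) / (1 + d)"
    using d by (auto simp: l_def field_simps)
  have e: "0 < e" "(1 - l) * e = 1" using d by (auto simp: e_def l(3))
  have "P powr l \<le> ((A * B) powr ((1 + d) / 2)) powr l"
    using small P l by (intro powr_mono2) auto
  also have "\<dots> = A powr d * B powr d"
    using A B by (simp add: powr_powr powr_mult l(2))
  finally have "P powr l * F powr (1 - l) \<le> A powr d * B powr d * F powr (1 - l)"
    by (rule mult_right_mono) simp
  with interpolation have "A powr d * A powr (1 - d) \<le> A powr d * (B powr d * F powr (1 - l))"
    using A by (simp add: l_def mult.assoc flip: powr_add)
  hence "A powr (1 - d) \<le> B powr d * F powr (1 - l)"
    using A by (simp add: mult_le_cancel_left_pos)
  hence "(A powr (1 - d)) powr e \<le> (B powr d * F powr (1 - l)) powr e"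
    using A e by (intro powr_mono2) auto
  also have "\<dots> = B powr (d * e) * F"
    using F e by (simp add: powr_mult powr_powr)
  finally show ?thesis
    using A B d by (simp add: powr_powr e_def mult.commute)
qed

lemma min_powr_le_powr_mult:
  fixes x y p :: real
  assumes "0 < x" "0 < y"
  shows "min (x powr p) (y powr p) \<le> (x * y) powr (p / 2)"
proof -
  have sq: "z powr p = (z powr (p / 2))\<^sup>2" if "0 < z" for z :: real
    using that by (simp add: power2_eq_square flip: powr_add)
  have "(min (x powr p) (y powr p))\<^sup>2 \<le> x powr p * y powr p"
    unfolding power2_eq_square by (intro mult_mono) auto
  also have "\<dots> = ((x * y) powr (p / 2))\<^sup>2"
    using assms by (simp add: sq powr_mult power_mult_distrib)
  finally show ?thesis by (rule power2_le_imp_le) simp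
qed

lemma powr_mult_self_half:
  fixes x d :: real
  assumes "0 < x"
  shows "(x * x) powr ((1 + d) / 2) = x powr d * x"
proof -
  have "(x * x) powr ((1 + d) / 2) = x powr ((1 + d) / 2 + (1 + d) / 2)"
    by (simp only: powr_mult powr_add[symmetric])
  also have "(1 + d) / 2 + (1 + d) / 2 = d + 1" by simp
  finally show ?thesis using assms by (simp add: powr_add)
qed

lemma one_le_pow8_mult_two_minus:
  fixes w :: real
  assumes "1 \<le> w" "w \<le> 7/4"
  shows "1 \<le> w ^ 8 * (2 - w)"
proof -
  define e where "e = w - 1"
  have e: "0 \<le> e" "e \<le> 3/4" using assms by (auto simp: e_def)
  have "1 + real 8 * e \<le> (1 + e) ^ 8" by (rule Bernoulli_inequality) (use e in auto)
  hence "(1 + 8 * e) * (1 - e) \<le> (1 + e) ^ 8 * (1 - e)" using e by (intro mult_right_mono) auto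
  moreover have "1 \<le> (1 + 8 * e) * (1 - e)"
  proof -
    have "0 \<le> e * (7 - 8 * e)" using e by (intro mult_nonneg_nonneg) auto
    thus ?thesis by (simp add: algebra_simps)
  qed
  ultimately show ?thesis by (simp add: e_def)
qed

lemma geometric_mean_le_sum_minus_one_scaled:
  fixes X Y F G w :: real
  assumes X: "1 \<le> X" and Y: "1 \<le> Y" and w: "1 \<le> w" "w \<le> 7/4"
    and XF: "X \<le> w * F" and YG: "Y \<le> w * G" and w9: "w ^ 9 \<le> sqrt (X * Y)"
  shows "sqrt (X * Y) \<le> F + G - 1"
proof -
  define Z where "Z = sqrt (X * Y)"
  have "w \<le> w * (w ^ 8 * (2 - w))"
    using one_le_pow8_mult_two_minus[OF w] w by simp
  also have "\<dots> = w ^ 9 * (2 - w)" by (simp add: power_Suc[symmetric] del: power_Suc)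
  also have "\<dots> \<le> Z * (2 - w)" using w9 w by (intro mult_right_mono) (auto simp: Z_def)
  finally have "Z * w \<le> 2 * Z - w" by (simp add: algebra_simps)
  also have "\<dots> \<le> X + Y - w" using arith_geo_mean_sqrt[of X Y] X Y by (simp add: Z_def)
  also have "\<dots> \<le> w * (F + G - 1)" using XF YG by (simp add: algebra_simps)
  finally show ?thesis using w by (simp add: Z_def mult.commute)
qed

lemma geometric_mean_le_sum_minus_one:
  fixes X Y F G \<gamma> :: real
  assumes XY: "1 \<le> X" "1 \<le> Y" and FG: "0 \<le> F" "0 \<le> G" and \<gamma>: "0 < \<gamma>" "\<gamma> \<le> 1/19"
    and X74: "X \<le> 7/4 * F" and Y74: "Y \<le> 7/4 * G"
    and XYF: "X \<le> Y powr \<gamma> * F" and YXG: "Y \<le> X powr \<gamma> * G"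
  shows "sqrt (X * Y) \<le> F + G - 1"
proof -
  define W where "W = max X Y"
  define w where "w = min (W powr \<gamma>) (7/4)"
  have W: "1 \<le> W" "X powr \<gamma> \<le> W powr \<gamma>" "Y powr \<gamma> \<le> W powr \<gamma>"
    using XY \<gamma> by (auto simp: W_def intro!: powr_mono2)
  have w: "1 \<le> w" "w \<le> 7/4" using W \<gamma> by (auto simp: w_def ge_one_powr_ge_zero)
  have "X \<le> w * F \<and> Y \<le> w * G"
  proof (cases "W powr \<gamma> \<le> 7/4")
    case True
    hence "w = W powr \<gamma>" by (simp add: w_def)
    thus ?thesis using XYF YXG W FG by (meson mult_right_mono order_trans)
  next
    case False
    hence "w = 7/4" by (simp add: w_def)
    thus ?thesis using X74 Y74 by (simp only:)
  qed
  moreover have "w ^ 9 \<le> sqrt (X * Y)"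
  proof -
    have "w ^ 9 \<le> (W powr \<gamma>) ^ 9" using w by (intro power_mono) (auto simp: w_def)
    also have "\<dots> = W powr (9 * \<gamma>)" using W by (simp add: powr_realpow[symmetric] powr_powr mult.commute)
    also have "\<dots> \<le> W powr (1/2)" using W \<gamma> by (intro powr_mono) auto
    also have "\<dots> \<le> (X * Y) powr (1/2)"
      using XY W by (intro powr_mono2) (auto simp: W_def max_def)
    finally show ?thesis using XY by (simp add: powr_half_sqrt)
  qed
  ultimately show ?thesis using geometric_mean_le_sum_minus_one_scaled[OF XY w] by blast
qed

text \<open>The three terms on the right are the row, column and Cauchy-Davenport lower bounds for
  the difference sum in \<open>sum_diff_max_powr_ge_normalized\<close>.\<close>
lemma sum_product_powr_le_max:
  fixes a b :: "'a \<Rightarrow> real" and d :: real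
  assumes finS: "finite S" and finT: "finite T"
    and s0: "s0 \<in> S" "a s0 = 1" and t0: "t0 \<in> T" "b t0 = 1"
    and apos: "\<And>s. s \<in> S \<Longrightarrow> 0 < a s" and bpos: "\<And>t. t \<in> T \<Longrightarrow> 0 < b t"
    and cS: "real (card S) powr d \<le> 7/4" and cT: "real (card T) powr d \<le> 7/4"
    and d: "0 < d" "d \<le> 1/20"
  shows "((\<Sum>s\<in>S. a s) * (\<Sum>t\<in>T. b t)) powr ((1 + d) / 2)
    \<le> max (\<Sum>s\<in>S. a s powr ((1 + d) / 2)) (max (\<Sum>t\<in>T. b t powr ((1 + d) / 2))
         ((\<Sum>s\<in>S. a s powr (1 + d)) + (\<Sum>t\<in>T. b t powr (1 + d)) - 1))"
proof -
  define A where "A = (\<Sum>s\<in>S. a s)"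
  define B where "B = (\<Sum>t\<in>T. b t)"
  define P where "P = (\<Sum>s\<in>S. a s powr ((1 + d) / 2))"
  define Q where "Q = (\<Sum>t\<in>T. b t powr ((1 + d) / 2))"
  define F where "F = (\<Sum>s\<in>S. a s powr (1 + d))"
  define G where "G = (\<Sum>t\<in>T. b t powr (1 + d))"
  define X where "X = A powr (1 + d)"
  define Y where "Y = B powr (1 + d)"
  define \<gamma> where "\<gamma> = d / (1 - d)"
  have neS: "S \<noteq> {}" and neT: "T \<noteq> {}" using s0 t0 by auto
  have A: "1 \<le> A" unfolding A_def
    using member_le_sum[of s0 S a] s0 finS apos by (fastforce intro: less_imp_le)
  have B: "1 \<le> B" unfolding B_def
    using member_le_sum[of t0 T b] t0 finT bpos by (fastforce intro: less_imp_le)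
  have FG: "0 \<le> F" "0 \<le> G" "0 \<le> P" "0 \<le> Q" unfolding F_def G_def P_def Q_def by (auto intro: sum_nonneg)
  have XY: "1 \<le> X" "1 \<le> Y" using A B d by (auto simp: X_def Y_def ge_one_powr_ge_zero)
  have \<gamma>: "0 < \<gamma>" "\<gamma> \<le> 1/19" using d by (auto simp: \<gamma>_def field_simps)
  have Z: "(A * B) powr ((1 + d) / 2) = sqrt (X * Y)"
    using A B d by (simp add: X_def Y_def powr_half_sqrt[symmetric] powr_mult powr_powr)
  have "sqrt (X * Y) \<le> F + G - 1" if PZ: "P < sqrt (X * Y)" and QZ: "Q < sqrt (X * Y)"
  proof -
    have "X \<le> real (card S) powr d * F"
      using power_mean_sum_powr[OF finS neS apos d(1)] by (simp add: X_def A_def F_def)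
    with cS FG have X74: "X \<le> 7/4 * F" by (meson mult_right_mono order_trans)
    have "Y \<le> real (card T) powr d * G"
      using power_mean_sum_powr[OF finT neT bpos d(1)] by (simp add: Y_def B_def G_def)
    with cT FG have Y74: "Y \<le> 7/4 * G" by (meson mult_right_mono order_trans)
    have XYF: "X \<le> Y powr \<gamma> * F"
      using Lyapunov_small_moment_bound[OF A B FG(1) FG(3)] Lyapunov_sum_powr[OF finS neS apos] d PZ Z
      by (simp add: A_def P_def F_def X_def Y_def \<gamma>_def)
    have YXG: "Y \<le> X powr \<gamma> * G"
      using Lyapunov_small_moment_bound[OF B A FG(2) FG(4)] Lyapunov_sum_powr[OF finT neT bpos] d QZ Z
      by (simp add: B_def Q_def G_def X_def Y_def \<gamma>_def mult.commute)
    show ?thesis by (rule geometric_mean_le_sum_minus_one[OF XY FG(1,2) \<gamma> X74 Y74 XYF YXG])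
  qed
  hence "(A * B) powr ((1 + d) / 2) \<le> max P (max Q (F + G - 1))"
    unfolding Z by linarith
  thus ?thesis by (simp add: A_def B_def P_def Q_def F_def G_def)
qed

section \<open>Difference sets and a weighted Cauchy-Davenport inequality\<close>

definition diff_set :: "'a::ab_group_add set \<Rightarrow> 'a set \<Rightarrow> 'a set" where
  "diff_set S T = (\<lambda>(s, t). s - t) ` (S \<times> T)"

text \<open>Only meaningful for \<open>d \<in> diff_set S T\<close>: \<open>Max {}\<close> is unspecified.\<close>
definition diff_max :: "('a::ab_group_add \<Rightarrow> 'a \<Rightarrow> real) \<Rightarrow> 'a set \<Rightarrow> 'a set \<Rightarrow> 'a \<Rightarrow> real" where
  "diff_max f S T d = Max ((\<lambda>(s, t). f s t) ` {(s, t). s \<in> S \<and> t \<in> T \<and> s - t = d})"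

lemma diff_setI: "s \<in> S \<Longrightarrow> t \<in> T \<Longrightarrow> s - t \<in> diff_set S T"
  unfolding diff_set_def by force

lemma diff_setE:
  assumes "d \<in> diff_set S T"
  obtains s t where "s \<in> S" "t \<in> T" "d = s - t"
  using assms unfolding diff_set_def by force

lemma finite_diff_set: "finite S \<Longrightarrow> finite T \<Longrightarrow> finite (diff_set S T)"
  unfolding diff_set_def by simp

lemma diff_set_mono: "S' \<subseteq> S \<Longrightarrow> T' \<subseteq> T \<Longrightarrow> diff_set S' T' \<subseteq> diff_set S T"
  unfolding diff_set_def by auto

lemma card_diff_set_ge:
  fixes S T :: "'a::linordered_ab_group_add set"
  assumes "finite S" "finite T" "S \<noteq> {}" "T \<noteq> {}"
  shows "card S + card T \<le> card (diff_set S T) + 1"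
proof -
  have Max: "Max S \<in> S" "Max T \<in> T" using assms by auto
  define U where "U = (\<lambda>s. s - Max T) ` S"
  define V where "V = (\<lambda>t. Max S - t) ` T"
  have "card U = card S" "card V = card T" unfolding U_def V_def by (auto intro!: card_image inj_onI)
  moreover have "U \<inter> V \<subseteq> {Max S - Max T}"
  proof
    fix x assume "x \<in> U \<inter> V"
    then obtain s t where st: "s \<in> S" "t \<in> T" "x = s - Max T" "x = Max S - t" by (auto simp: U_def V_def)
    have "x \<le> Max S - Max T" using st(1,3) assms by (simp add: diff_right_mono)
    moreover have "Max S - Max T \<le> x" using st(2,4) assms by (simp add: diff_left_mono)
    ultimately show "x \<in> {Max S - Max T}" by simp
  qed
  hence "card (U \<inter> V) \<le> 1" using card_mono[of "{Max S - Max T}" "U \<inter> V"] by auto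
  moreover have "card (U \<union> V) + card (U \<inter> V) = card U + card V"
    using card_Un_Int[of U V] assms by (auto simp: U_def V_def)
  moreover have "U \<union> V \<subseteq> diff_set S T" using Max by (auto simp: U_def V_def intro: diff_setI)
  hence "card (U \<union> V) \<le> card (diff_set S T)" by (intro card_mono finite_diff_set) (use assms in auto)
  ultimately show ?thesis by linarith
qed

lemma finite_diff_reps:
  "finite S \<Longrightarrow> finite T \<Longrightarrow> finite {(s, t). s \<in> S \<and> t \<in> T \<and> s - t = d}"
  by (rule finite_subset[of _ "S \<times> T"]) auto

lemma diff_max_ge:
  "finite S \<Longrightarrow> finite T \<Longrightarrow> s \<in> S \<Longrightarrow> t \<in> T \<Longrightarrow> f s t \<le> diff_max f S T (s - t)"
  unfolding diff_max_def by (rule Max_ge) (auto intro: finite_diff_reps)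

lemma diff_max_attained:
  assumes "finite S" "finite T" "d \<in> diff_set S T"
  obtains s t where "s \<in> S" "t \<in> T" "s - t = d" "diff_max f S T d = f s t"
proof -
  have "{(s, t). s \<in> S \<and> t \<in> T \<and> s - t = d} \<noteq> {}" using assms(3) by (auto simp: diff_set_def)
  hence "diff_max f S T d \<in> (\<lambda>(s, t). f s t) ` {(s, t). s \<in> S \<and> t \<in> T \<and> s - t = d}"
    unfolding diff_max_def using assms by (intro Max_in) (auto intro: finite_diff_reps)
  thus ?thesis using that by auto
qed

lemma diff_max_mono:
  assumes "finite S" "finite T" "d \<in> diff_set S T" "\<And>s t. s \<in> S \<Longrightarrow> t \<in> T \<Longrightarrow> f s t \<le> g s t"
  shows "diff_max f S T d \<le> diff_max g S T d"
proof -
  obtain s t where "s \<in> S" "t \<in> T" "s - t = d" "diff_max f S T d = f s t"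
    using diff_max_attained[OF assms(1-3)] .
  thus ?thesis using assms(4) diff_max_ge[OF assms(1,2), of s t g] by fastforce
qed

lemma diff_max_nonneg:
  assumes "finite S" "finite T" "d \<in> diff_set S T" "\<And>s t. 0 \<le> f s t"
  shows "0 \<le> diff_max f S T d"
  using diff_max_attained[OF assms(1-3), of f] assms(4) by metis

lemma diff_max_cmult:
  assumes "finite S" "finite T" "d \<in> diff_set S T" "0 \<le> c"
  shows "diff_max (\<lambda>s t. c * f s t) S T d = c * diff_max f S T d"
proof -
  define R where "R = (\<lambda>(s, t). f s t) ` {(s, t). s \<in> S \<and> t \<in> T \<and> s - t = d}"
  have "finite R" "R \<noteq> {}" using assms finite_diff_reps[OF assms(1,2)] by (auto simp: R_def diff_set_def)
  moreover have "mono ((*) c)" using assms(4) by (auto intro: monoI mult_left_mono)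
  ultimately have "c * Max R = Max ((*) c ` R)" by (rule mono_Max_commute[rotated -2])
  thus ?thesis by (simp add: diff_max_def R_def image_image case_prod_beta)
qed

lemma sum_diff_max_ge_row:
  assumes finS: "finite S" and finT: "finite T" and t0: "t0 \<in> T" and f0: "\<And>s t. 0 \<le> f s t"
  shows "(\<Sum>s\<in>S. f s t0) \<le> (\<Sum>d\<in>diff_set S T. diff_max f S T d)"
proof -
  have "(\<Sum>s\<in>S. f s t0) \<le> (\<Sum>s\<in>S. diff_max f S T (s - t0))"
    by (rule sum_mono) (rule diff_max_ge[OF finS finT _ t0])
  also have "\<dots> = (\<Sum>d\<in>(\<lambda>s. s - t0) ` S. diff_max f S T d)"
    by (rule sum.reindex[symmetric, unfolded comp_def]) (auto simp: inj_on_def)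
  also have "\<dots> \<le> (\<Sum>d\<in>diff_set S T. diff_max f S T d)"
    using finS finT t0 by (intro sum_mono2) (auto intro: finite_diff_set diff_setI diff_max_nonneg f0)
  finally show ?thesis .
qed

lemma sum_diff_max_ge_column:
  assumes finS: "finite S" and finT: "finite T" and s0: "s0 \<in> S" and f0: "\<And>s t. 0 \<le> f s t"
  shows "(\<Sum>t\<in>T. f s0 t) \<le> (\<Sum>d\<in>diff_set S T. diff_max f S T d)"
proof -
  have "(\<Sum>t\<in>T. f s0 t) \<le> (\<Sum>t\<in>T. diff_max f S T (s0 - t))"
    by (rule sum_mono) (rule diff_max_ge[OF finS finT s0])
  also have "\<dots> = (\<Sum>d\<in>(\<lambda>t. s0 - t) ` T. diff_max f S T d)"
    by (rule sum.reindex[symmetric, unfolded comp_def]) (auto simp: inj_on_def)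
  also have "\<dots> \<le> (\<Sum>d\<in>diff_set S T. diff_max f S T d)"
    using finS finT s0 by (intro sum_mono2) (auto intro: finite_diff_set diff_setI diff_max_nonneg f0)
  finally show ?thesis .
qed

lemma sum_above_level:
  fixes u :: "'a \<Rightarrow> real"
  assumes "finite S" "\<forall>s\<in>S. m \<le> u s"
  shows "(\<Sum>s\<in>{s\<in>S. m < u s}. u s - m) = (\<Sum>s\<in>S. u s) - m * card S"
proof -
  have "(\<Sum>s\<in>{s\<in>S. m < u s}. u s - m) = (\<Sum>s\<in>S. u s - m)"
    using assms by (intro sum.mono_neutral_left) (auto simp: not_less intro: order.antisym)
  thus ?thesis by (simp add: sum_subtractf)
qed

lemma card_above_level_less:
  fixes u v :: "'a \<Rightarrow> real"
  assumes finS: "finite S" and finT: "finite T" and m: "m \<in> u ` S \<union> v ` T"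
  shows "card {s\<in>S. m < u s} + card {t\<in>T. m < v t} < card S + card T"
proof -
  have le: "card {s\<in>S. m < u s} \<le> card S" "card {t\<in>T. m < v t} \<le> card T"
    using finS finT by (auto intro: card_mono)
  from m consider s where "s \<in> S" "u s = m" | t where "t \<in> T" "v t = m" by blast
  thus ?thesis
  proof cases
    case 1
    hence "{s\<in>S. m < u s} \<subset> S" by (metis (mono_tags) mem_Collect_eq less_irrefl psubsetI subsetI)
    thus ?thesis using psubset_card_mono[OF finS] le by (meson add_less_le_mono)
  next
    case 2
    hence "{t\<in>T. m < v t} \<subset> T" by (metis (mono_tags) mem_Collect_eq less_irrefl psubsetI subsetI)
    thus ?thesis using psubset_card_mono[OF finT] le by (meson add_le_less_mono)
  qed
qed

lemma diff_max_min_ge_level: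
  fixes u v :: "'a::ab_group_add \<Rightarrow> real"
  assumes fin: "finite S" "finite T" and D: "D \<in> diff_set S T"
    and m: "\<forall>s\<in>S. m \<le> u s" "\<forall>t\<in>T. m \<le> v t"
  defines "S' \<equiv> {s\<in>S. m < u s}" and "T' \<equiv> {t\<in>T. m < v t}"
  shows "m + (if D \<in> diff_set S' T' then diff_max (\<lambda>s t. min (u s - m) (v t - m)) S' T' D else 0)
         \<le> diff_max (\<lambda>s t. min (u s) (v t)) S T D"
proof (cases "D \<in> diff_set S' T'")
  case True
  have "finite S'" "finite T'" using fin by (auto simp: S'_def T'_def)
  then obtain s t where st: "s \<in> S'" "t \<in> T'" "s - t = D"
      "diff_max (\<lambda>s t. min (u s - m) (v t - m)) S' T' D = min (u s - m) (v t - m)"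
    using diff_max_attained[OF _ _ True] by blast
  have "m + min (u s - m) (v t - m) = min (u s) (v t)" by (simp add: min_def)
  also have "\<dots> \<le> diff_max (\<lambda>s t. min (u s) (v t)) S T D"
    using diff_max_ge[OF fin, of s t] st by (simp add: S'_def T'_def)
  finally show ?thesis using True st(4) by simp
next
  case False
  obtain s t where st: "s \<in> S" "t \<in> T" "D = s - t" using D by (rule diff_setE)
  have "m \<le> min (u s) (v t)" using m st by simp
  also have "\<dots> \<le> diff_max (\<lambda>s t. min (u s) (v t)) S T D"
    using diff_max_ge[OF fin st(1,2)] st(3) by simp
  finally show ?thesis using False by simp
qed

text \<open>Proved by peeling off the lowest level \<open>m\<close> of the weights: at height \<open>m\<close> the level sets
  are all of \<open>S\<close> and \<open>T\<close>, where \<open>card_diff_set_ge\<close> applies, and what lies above \<open>m\<close> is an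
  instance with fewer points.\<close>
theorem weighted_Cauchy_Davenport:
  fixes u v :: "'a::linordered_ab_group_add \<Rightarrow> real"
  assumes "finite S" "finite T" "s0 \<in> S" "u s0 = M" "t0 \<in> T" "v t0 = M"
    and "\<forall>s\<in>S. 0 < u s \<and> u s \<le> M" "\<forall>t\<in>T. 0 < v t \<and> v t \<le> M"
  shows "(\<Sum>s\<in>S. u s) + (\<Sum>t\<in>T. v t) - M \<le> (\<Sum>d\<in>diff_set S T. diff_max (\<lambda>s t. min (u s) (v t)) S T d)"
  using assms
proof (induction "card S + card T" arbitrary: S T u v M s0 t0 rule: less_induct)
  case less
  note finS = less.prems(1) and finT = less.prems(2) and s0 = less.prems(3,4) and t0 = less.prems(5,6)
    and u = less.prems(7) and v = less.prems(8)
  define m where "m = Min (u ` S \<union> v ` T)"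
  define S' where "S' = {s\<in>S. m < u s}"
  define T' where "T' = {t\<in>T. m < v t}"
  define g where "g = diff_max (\<lambda>s t. min (u s - m) (v t - m)) S' T'"
  have fin: "finite (u ` S \<union> v ` T)" using finS finT by simp
  have m_in: "m \<in> u ` S \<union> v ` T" unfolding m_def using fin s0 by (intro Min_in) auto
  have mu: "\<forall>s\<in>S. m \<le> u s" and mv: "\<forall>t\<in>T. m \<le> v t" using fin by (auto simp: m_def)
  have m0: "0 < m" using m_in u v by auto
  have mM: "m \<le> M" using mu s0 by auto
  have fin': "finite S'" "finite T'" using finS finT by (auto simp: S'_def T'_def)
  have sub': "S' \<subseteq> S" "T' \<subseteq> T" by (auto simp: S'_def T'_def)
  have peeled: "(\<Sum>s\<in>S'. u s - m) + (\<Sum>t\<in>T'. v t - m) - (M - m) \<le> (\<Sum>d\<in>diff_set S' T'. g d)"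
  proof (cases "m = M")
    case True
    hence "S' = {}" "T' = {}" using u v by (auto simp: S'_def T'_def)
    thus ?thesis using True by (simp add: diff_set_def)
  next
    case False
    have "card S' + card T' < card S + card T"
      unfolding S'_def T'_def by (rule card_above_level_less[OF finS finT m_in])
    moreover have "s0 \<in> S'" "t0 \<in> T'" using s0 t0 mM False by (auto simp: S'_def T'_def)
    moreover have "\<forall>s\<in>S'. 0 < u s - m \<and> u s - m \<le> M - m" "\<forall>t\<in>T'. 0 < v t - m \<and> v t - m \<le> M - m"
      using u v by (auto simp: S'_def T'_def)
    ultimately show ?thesis unfolding g_def
      by (intro less.hyps[where u = "\<lambda>s. u s - m" and v = "\<lambda>t. v t - m" and M = "M - m", OF _ fin'])
        (use s0 t0 in simp_all)
  qed
  have "card S + card T \<le> card (diff_set S T) + 1" using card_diff_set_ge[OF finS finT] s0 t0 by blast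
  hence cardD: "real (card S) + real (card T) - 1 \<le> real (card (diff_set S T))" by linarith
  have "(\<Sum>s\<in>S. u s) + (\<Sum>t\<in>T. v t) - M
      = m * (real (card S) + real (card T) - 1) + ((\<Sum>s\<in>S'. u s - m) + (\<Sum>t\<in>T'. v t - m) - (M - m))"
    unfolding S'_def T'_def sum_above_level[OF finS mu] sum_above_level[OF finT mv]
    by (simp add: algebra_simps)
  also have "\<dots> \<le> m * card (diff_set S T) + (\<Sum>d\<in>diff_set S' T'. g d)"
    using cardD m0 peeled by (intro add_mono mult_left_mono) auto
  also have "\<dots> = (\<Sum>d\<in>diff_set S T. m + (if d \<in> diff_set S' T' then g d else 0))"
  proof -
    have "(\<Sum>d\<in>diff_set S' T'. g d) = (\<Sum>d\<in>diff_set S T. if d \<in> diff_set S' T' then g d else 0)"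
      using sum.inter_restrict[OF finite_diff_set[OF finS finT], of g "diff_set S' T'"]
        diff_set_mono[OF sub'] by (simp add: Int_absorb1)
    thus ?thesis by (simp add: sum.distrib)
  qed
  also have "\<dots> \<le> (\<Sum>d\<in>diff_set S T. diff_max (\<lambda>s t. min (u s) (v t)) S T d)"
    unfolding g_def S'_def T'_def using finS finT mu mv by (intro sum_mono diff_max_min_ge_level)
  finally show ?case .
qed

lemma sum_diff_max_powr_ge_normalized:
  fixes a b :: "'a::linordered_ab_group_add \<Rightarrow> real" and d :: real
  assumes finS: "finite S" and finT: "finite T"
    and s0: "s0 \<in> S" "a s0 = 1" and t0: "t0 \<in> T" "b t0 = 1"
    and a: "\<forall>s\<in>S. 0 < a s \<and> a s \<le> 1" and b: "\<forall>t\<in>T. 0 < b t \<and> b t \<le> 1"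
    and cS: "real (card S) powr d \<le> 7/4" and cT: "real (card T) powr d \<le> 7/4"
    and d: "0 < d" "d \<le> 1/20"
  shows "((\<Sum>s\<in>S. a s) * (\<Sum>t\<in>T. b t)) powr ((1 + d) / 2)
    \<le> (\<Sum>x\<in>diff_set S T. diff_max (\<lambda>s t. (a s * b t) powr ((1 + d) / 2)) S T x)"
proof -
  define f where "f = (\<lambda>s t. (a s * b t) powr ((1 + d) / 2))"
  define L where "L = (\<Sum>x\<in>diff_set S T. diff_max f S T x)"
  have f0: "\<And>s t. 0 \<le> f s t" by (simp add: f_def)
  have "(\<Sum>s\<in>S. a s powr ((1 + d) / 2)) \<le> L"
    using sum_diff_max_ge_row[where f = f, OF finS finT t0(1) f0] t0(2) by (simp add: f_def L_def)
  moreover have "(\<Sum>t\<in>T. b t powr ((1 + d) / 2)) \<le> L"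
    using sum_diff_max_ge_column[where f = f, OF finS finT s0(1) f0] s0(2) by (simp add: f_def L_def)
  moreover have "(\<Sum>s\<in>S. a s powr (1 + d)) + (\<Sum>t\<in>T. b t powr (1 + d)) - 1 \<le> L"
  proof -
    have "a s powr (1 + d) \<le> a s" if "s \<in> S" for s using a that d by (intro powr_le_one_le) auto
    moreover have "b t powr (1 + d) \<le> b t" if "t \<in> T" for t using b that d by (intro powr_le_one_le) auto
    ultimately have "(\<Sum>s\<in>S. a s powr (1 + d)) + (\<Sum>t\<in>T. b t powr (1 + d)) - 1
        \<le> (\<Sum>x\<in>diff_set S T. diff_max (\<lambda>s t. min (a s powr (1 + d)) (b t powr (1 + d))) S T x)"
      using a b s0 t0 by (intro weighted_Cauchy_Davenport[OF finS finT s0(1) _ t0(1)]) force+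
    also have "\<dots> \<le> L"
      unfolding L_def f_def using finS finT a b min_powr_le_powr_mult[of "a _" "b _" "1 + d"]
      by (intro sum_mono diff_max_mono) auto
    finally show ?thesis .
  qed
  ultimately show ?thesis
    using sum_product_powr_le_max[where a = a and b = b, OF finS finT s0 t0 _ _ cS cT d] a b
    by (force simp: L_def f_def)
qed

lemma sum_diff_max_powr_ge:
  fixes a b :: "'a::linordered_ab_group_add \<Rightarrow> real" and d :: real
  assumes finS: "finite S" and finT: "finite T" and neS: "S \<noteq> {}" and neT: "T \<noteq> {}"
    and apos: "\<And>s. s \<in> S \<Longrightarrow> 0 < a s" and bpos: "\<And>t. t \<in> T \<Longrightarrow> 0 < b t"
    and cS: "real (card S) powr d \<le> 7/4" and cT: "real (card T) powr d \<le> 7/4"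
    and d: "0 < d" "d \<le> 1/20"
  shows "((\<Sum>s\<in>S. a s) * (\<Sum>t\<in>T. b t)) powr ((1 + d) / 2)
    \<le> (\<Sum>x\<in>diff_set S T. diff_max (\<lambda>s t. (a s * b t) powr ((1 + d) / 2)) S T x)"
proof -
  define q where "q = (1 + d) / 2"
  define \<alpha> where "\<alpha> = Max (a ` S)"
  define \<beta> where "\<beta> = Max (b ` T)"
  have "\<alpha> \<in> a ` S" "\<beta> \<in> b ` T" unfolding \<alpha>_def \<beta>_def using finS neS finT neT by (auto intro!: Max_in)
  then obtain s0 t0 where s0: "s0 \<in> S" "a s0 = \<alpha>" and t0: "t0 \<in> T" "b t0 = \<beta>" by force
  have \<alpha>\<beta>: "0 < \<alpha>" "0 < \<beta>" using s0 t0 apos bpos by auto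
  have le: "\<And>s. s \<in> S \<Longrightarrow> a s \<le> \<alpha>" "\<And>t. t \<in> T \<Longrightarrow> b t \<le> \<beta>"
    using finS finT by (auto simp: \<alpha>_def \<beta>_def)
  define c where "c = (\<alpha> * \<beta>) powr q"
  have c0: "0 \<le> c" by (simp add: c_def)
  have rescale: "(x * y) powr q = c * (x / \<alpha> * (y / \<beta>)) powr q" if "0 \<le> x" "0 \<le> y" for x y
    using that \<alpha>\<beta> by (simp add: c_def powr_divide powr_mult)
  have "((\<Sum>s\<in>S. a s) * (\<Sum>t\<in>T. b t)) powr q = c * ((\<Sum>s\<in>S. a s / \<alpha>) * (\<Sum>t\<in>T. b t / \<beta>)) powr q"
    using rescale apos bpos by (simp add: sum_divide_distrib[symmetric] less_imp_le sum_nonneg)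
  also have "\<dots> \<le> c * (\<Sum>x\<in>diff_set S T. diff_max (\<lambda>s t. (a s / \<alpha> * (b t / \<beta>)) powr q) S T x)"
    using sum_diff_max_powr_ge_normalized[OF finS finT, of s0 "\<lambda>s. a s / \<alpha>" t0 "\<lambda>t. b t / \<beta>"]
      s0 t0 apos bpos le \<alpha>\<beta> cS cT d c0
    by (intro mult_left_mono) (auto simp: q_def)
  also have "\<dots> = (\<Sum>x\<in>diff_set S T. diff_max (\<lambda>s t. c * (a s / \<alpha> * (b t / \<beta>)) powr q) S T x)"
    using finS finT c0 by (simp add: sum_distrib_left diff_max_cmult)
  also have "\<dots> \<le> (\<Sum>x\<in>diff_set S T. diff_max (\<lambda>s t. (a s * b t) powr q) S T x)"
    using finS finT rescale apos bpos by (intro sum_mono diff_max_mono) (auto simp: less_imp_le)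
  finally show ?thesis by (simp add: q_def)
qed

section \<open>Integers with restricted digits\<close>

definition digit_set :: "nat \<Rightarrow> nat \<Rightarrow> int set" where
  "digit_set N r = {(\<Sum>j<r. int (x j) * (2 * int N) ^ j) | x. \<forall>j<r. x j < N}"

lemma digit_set_0: "digit_set N 0 = {0}"
  unfolding digit_set_def by auto

lemma digit_set_Suc:
  "z \<in> digit_set N (Suc r) \<longleftrightarrow> (\<exists>s y. 0 \<le> s \<and> s < int N \<and> y \<in> digit_set N r \<and> z = s + 2 * int N * y)"
proof
  assume "z \<in> digit_set N (Suc r)"
  then obtain x where x: "\<forall>j<Suc r. x j < N" "z = (\<Sum>j<Suc r. int (x j) * (2 * int N) ^ j)"
    unfolding digit_set_def by auto
  have "z = int (x 0) + 2 * int N * (\<Sum>j<r. int (x (Suc j)) * (2 * int N) ^ j)"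
    unfolding x(2) sum.lessThan_Suc_shift by (simp add: sum_distrib_left mult_ac)
  moreover have "(\<Sum>j<r. int (x (Suc j)) * (2 * int N) ^ j) \<in> digit_set N r"
    unfolding digit_set_def using x(1) by auto
  moreover have "0 \<le> int (x 0)" "int (x 0) < int N" using x(1) by auto
  ultimately show "\<exists>s y. 0 \<le> s \<and> s < int N \<and> y \<in> digit_set N r \<and> z = s + 2 * int N * y"
    by blast
next
  assume "\<exists>s y. 0 \<le> s \<and> s < int N \<and> y \<in> digit_set N r \<and> z = s + 2 * int N * y"
  then obtain s y where sy: "0 \<le> s" "s < int N" "y \<in> digit_set N r" "z = s + 2 * int N * y" by auto
  from sy(3) obtain x where x: "\<forall>j<r. x j < N" "y = (\<Sum>j<r. int (x j) * (2 * int N) ^ j)"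
    unfolding digit_set_def by auto
  define x' where "x' = (\<lambda>j. if j = 0 then nat s else x (j - 1))"
  have "\<forall>j<Suc r. x' j < N" using x(1) sy by (auto simp: x'_def less_Suc_eq_0_disj)
  moreover have "z = (\<Sum>j<Suc r. int (x' j) * (2 * int N) ^ j)"
    unfolding sum.lessThan_Suc_shift using sy x by (simp add: x'_def sum_distrib_left mult_ac)
  ultimately show "z \<in> digit_set N (Suc r)" unfolding digit_set_def by blast
qed

lemma digit_set_bound: "y \<in> digit_set N r \<Longrightarrow> 0 \<le> y \<and> 2 * y < (2 * int N) ^ r"
proof (induction r arbitrary: y)
  case 0 thus ?case by (simp add: digit_set_0)
next
  case (Suc r)
  then obtain s y' where sy: "0 \<le> s" "s < int N" "y' \<in> digit_set N r" "y = s + 2 * int N * y'"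
    using digit_set_Suc by blast
  have ih: "0 \<le> y'" "2 * y' + 1 \<le> (2 * int N) ^ r" using Suc.IH[OF sy(3)] by auto
  have "2 * int N * (2 * y') \<le> 2 * int N * ((2 * int N) ^ r - 1)"
    using ih sy by (intro mult_left_mono) auto
  thus ?case using sy ih by (simp add: algebra_simps)
qed

lemma finite_digit_set: "finite (digit_set N r)"
proof -
  have "digit_set N r \<subseteq> {0..(2 * int N) ^ r}" using digit_set_bound by fastforce
  thus ?thesis by (rule finite_subset) simp
qed

lemma low_digit_unique:
  fixes s s' y y' :: int and N :: nat
  assumes "0 \<le> s" "s < int N" "0 \<le> s'" "s' < int N" "s + 2 * int N * y = s' + 2 * int N * y'"
  shows "s = s' \<and> y = y'"
proof -
  have "s = (s + 2 * int N * y) mod (2 * int N)" using assms(1,2) by simp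
  also have "\<dots> = s'" unfolding assms(5) using assms(3,4) by simp
  finally show ?thesis using assms by simp
qed

definition digit_fibre :: "nat \<Rightarrow> nat \<Rightarrow> int set \<Rightarrow> int \<Rightarrow> int set" where
  "digit_fibre N r A s = {y \<in> digit_set N r. s + 2 * int N * y \<in> A}"

definition low_digits :: "nat \<Rightarrow> nat \<Rightarrow> int set \<Rightarrow> int set" where
  "low_digits N r A = {s \<in> {0..<int N}. digit_fibre N r A s \<noteq> {}}"

lemma finite_digit_fibre: "finite (digit_fibre N r A s)"
  unfolding digit_fibre_def using finite_digit_set by simp

lemma low_digits_subset: "low_digits N r A \<subseteq> {0..<int N}"
  unfolding low_digits_def by auto

lemma finite_low_digits: "finite (low_digits N r A)"
  using finite_subset[OF low_digits_subset] by simp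

lemma card_eq_sum_card_digit_fibre:
  assumes "A \<subseteq> digit_set N (Suc r)"
  shows "card A = (\<Sum>s\<in>low_digits N r A. card (digit_fibre N r A s))"
proof -
  have "bij_betw (\<lambda>(s, y). s + 2 * int N * y) (Sigma (low_digits N r A) (digit_fibre N r A)) A"
  proof (rule bij_betwI')
    fix x y
    assume "x \<in> Sigma (low_digits N r A) (digit_fibre N r A)" "y \<in> Sigma (low_digits N r A) (digit_fibre N r A)"
    thus "((\<lambda>(s, y). s + 2 * int N * y) x = (\<lambda>(s, y). s + 2 * int N * y) y) = (x = y)"
      using low_digit_unique[of _ N] by (auto simp: low_digits_def)
  next
    fix x assume "x \<in> Sigma (low_digits N r A) (digit_fibre N r A)"
    thus "(\<lambda>(s, y). s + 2 * int N * y) x \<in> A" by (auto simp: digit_fibre_def)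
  next
    fix z assume z: "z \<in> A"
    then obtain s y where "0 \<le> s" "s < int N" "y \<in> digit_set N r" "z = s + 2 * int N * y"
      using assms digit_set_Suc by blast
    thus "\<exists>x\<in>Sigma (low_digits N r A) (digit_fibre N r A). z = (\<lambda>(s, y). s + 2 * int N * y) x"
      using z by (intro bexI[of _ "(s, y)"]) (auto simp: low_digits_def digit_fibre_def)
  qed
  hence "card A = card (Sigma (low_digits N r A) (digit_fibre N r A))" by (simp add: bij_betw_same_card)
  also have "\<dots> = (\<Sum>s\<in>low_digits N r A. card (digit_fibre N r A s))"
    using finite_low_digits finite_digit_fibre by (simp add: card_SigmaI)
  finally show ?thesis .
qed

text \<open>Shifted by \<open>D\<close>, the fibre difference sets over a low-digit difference \<open>D\<close> lie in the
  residue class of \<open>D\<close> modulo \<open>2N\<close>; distinct such \<open>D, D'\<close> satisfy \<open>0 < |D - D'| < 2N\<close>, so these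
  are disjoint pieces of \<open>A - B\<close>.\<close>
lemma sum_diff_max_card_digit_fibre_le:
  fixes N r :: nat and A B :: "int set"
  assumes N: "0 < N" and finA: "finite A" and finB: "finite B"
  defines "S \<equiv> low_digits N r A" and "T \<equiv> low_digits N r B"
  shows "(\<Sum>D\<in>diff_set S T. diff_max (\<lambda>s t. real (card (diff_set (digit_fibre N r A s) (digit_fibre N r B t)))) S T D)
    \<le> real (card (diff_set A B))"
proof -
  define F where "F = (\<lambda>s t. real (card (diff_set (digit_fibre N r A s) (digit_fibre N r B t))))"
  define c where "c = 2 * int N"
  define P where "P = (\<lambda>D. {z \<in> diff_set A B. c dvd (z - D)})"
  have finS: "finite S" "finite T" unfolding S_def T_def by (simp_all add: finite_low_digits)
  have finAB: "finite (diff_set A B)" using finA finB by (rule finite_diff_set)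
  have piece: "diff_max F S T D \<le> real (card (P D))" if D: "D \<in> diff_set S T" for D
  proof -
    obtain s t where st: "s \<in> S" "t \<in> T" "s - t = D" "diff_max F S T D = F s t"
      using diff_max_attained[OF finS D] by blast
    have "(\<lambda>z. D + c * z) ` diff_set (digit_fibre N r A s) (digit_fibre N r B t) \<subseteq> P D"
    proof
      fix x assume "x \<in> (\<lambda>z. D + c * z) ` diff_set (digit_fibre N r A s) (digit_fibre N r B t)"
      then obtain y y' where yy: "y \<in> digit_fibre N r A s" "y' \<in> digit_fibre N r B t" "x = D + c * (y - y')"
        by (auto elim!: diff_setE)
      have "s + c * y \<in> A" "t + c * y' \<in> B" using yy by (auto simp: digit_fibre_def c_def)
      moreover have "x = (s + c * y) - (t + c * y')" using yy st by (simp add: algebra_simps)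
      ultimately have "x \<in> diff_set A B" by (simp add: diff_setI)
      moreover have "c dvd (x - D)" using yy(3) by simp
      ultimately show "x \<in> P D" by (simp add: P_def)
    qed
    hence "card (diff_set (digit_fibre N r A s) (digit_fibre N r B t)) \<le> card (P D)"
      using N finAB by (subst card_image[symmetric, of "\<lambda>z. D + c * z"])
        (auto simp: inj_on_def c_def P_def intro!: card_mono)
    thus ?thesis using st(4) by (simp add: F_def)
  qed
  have disjoint: "P D \<inter> P D' = {}"
    if D: "D \<in> diff_set S T" "D' \<in> diff_set S T" and ne: "D \<noteq> D'" for D D'
  proof -
    obtain s t s' t' where st: "s \<in> S" "t \<in> T" "D = s - t" "s' \<in> S" "t' \<in> T" "D' = s' - t'"
      using D by (metis diff_setE)
    have "S \<subseteq> {0..<int N}" "T \<subseteq> {0..<int N}" unfolding S_def T_def by (rule low_digits_subset)+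
    hence "s \<in> {0..<int N}" "t \<in> {0..<int N}" "s' \<in> {0..<int N}" "t' \<in> {0..<int N}" using st by blast+
    hence "\<bar>D - D'\<bar> < c" unfolding c_def st(3,6) by auto
    hence "\<not> c dvd (D - D')" using ne dvd_imp_le_int[of "D - D'" c] by (auto simp: c_def)
    thus ?thesis unfolding P_def using dvd_diff[of c "_ - D'" "_ - D"] by fastforce
  qed
  have "(\<Sum>D\<in>diff_set S T. diff_max F S T D) \<le> (\<Sum>D\<in>diff_set S T. real (card (P D)))"
    by (rule sum_mono) (rule piece)
  also have "\<dots> = real (card (\<Union>D\<in>diff_set S T. P D))"
    using finS finAB disjoint by (simp add: card_UN_disjoint finite_diff_set P_def)
  also have "\<dots> \<le> real (card (diff_set A B))"
    using finAB by (auto intro!: card_mono simp: P_def)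
  finally show ?thesis by (simp add: F_def)
qed

theorem card_diff_set_digit_set_ge:
  fixes N :: nat and d :: real
  assumes N: "0 < N" and Nd: "real N powr d \<le> 7/4" and d: "0 < d" "d \<le> 1/20"
  shows "A \<subseteq> digit_set N r \<Longrightarrow> B \<subseteq> digit_set N r \<Longrightarrow> A \<noteq> {} \<Longrightarrow> B \<noteq> {} \<Longrightarrow>
    (real (card A) * real (card B)) powr ((1 + d) / 2) \<le> real (card (diff_set A B))"
proof (induction r arbitrary: A B)
  case 0
  hence "A = {0}" "B = {0}" by (auto simp: digit_set_0)
  thus ?case by (simp add: diff_set_def)
next
  case (Suc r)
  define S where "S = low_digits N r A"
  define T where "T = low_digits N r B"
  define a where "a = (\<lambda>s. real (card (digit_fibre N r A s)))"
  define b where "b = (\<lambda>t. real (card (digit_fibre N r B t)))"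
  have finAB: "finite A" "finite B"
    using Suc.prems(1,2) finite_digit_set by (auto intro: finite_subset)
  have finST: "finite S" "finite T" unfolding S_def T_def by (simp_all add: finite_low_digits)
  have cardA: "real (card A) = (\<Sum>s\<in>S. a s)" and cardB: "real (card B) = (\<Sum>t\<in>T. b t)"
    using card_eq_sum_card_digit_fibre[OF Suc.prems(1)] card_eq_sum_card_digit_fibre[OF Suc.prems(2)]
    by (simp_all add: S_def T_def a_def b_def)
  have "S \<noteq> {}" "T \<noteq> {}" using cardA cardB finAB Suc.prems(3,4) by auto
  moreover have "0 < a s" if "s \<in> S" for s
    using that finite_digit_fibre by (auto simp: a_def S_def low_digits_def card_gt_0_iff)
  moreover have "0 < b t" if "t \<in> T" for t
    using that finite_digit_fibre by (auto simp: b_def T_def low_digits_def card_gt_0_iff)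
  moreover have "real (card S) powr d \<le> 7/4" "real (card T) powr d \<le> 7/4"
  proof -
    have "card S \<le> N" "card T \<le> N"
      using card_mono[OF _ low_digits_subset] by (auto simp: S_def T_def)
    hence "real (card S) powr d \<le> real N powr d" "real (card T) powr d \<le> real N powr d"
      using d by (simp_all add: powr_mono2)
    thus "real (card S) powr d \<le> 7/4" "real (card T) powr d \<le> 7/4" using Nd by linarith+
  qed
  ultimately have "(real (card A) * real (card B)) powr ((1 + d) / 2)
      \<le> (\<Sum>D\<in>diff_set S T. diff_max (\<lambda>s t. (a s * b t) powr ((1 + d) / 2)) S T D)"
    unfolding cardA cardB using finST d by (intro sum_diff_max_powr_ge) auto
  also have "\<dots> \<le> (\<Sum>D\<in>diff_set S T. diff_max (\<lambda>s t. real (card (diff_set (digit_fibre N r A s) (digit_fibre N r B t)))) S T D)"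
  proof (intro sum_mono diff_max_mono finST)
    fix s t assume "s \<in> S" "t \<in> T"
    thus "(a s * b t) powr ((1 + d) / 2) \<le> real (card (diff_set (digit_fibre N r A s) (digit_fibre N r B t)))"
      unfolding a_def b_def by (intro Suc.IH) (auto simp: S_def T_def low_digits_def digit_fibre_def)
  qed
  also have "\<dots> \<le> real (card (diff_set A B))"
    unfolding S_def T_def by (rule sum_diff_max_card_digit_fibre_le[OF N finAB])
  finally show ?case .
qed

section \<open>The set \<open>calB\<close>\<close>

lemma calB_eq_digit_set: "calB m p = digit_set (Mpar m) (rpar m p)"
  unfolding calB_def digit_set_def by simp

lemma two_Mpar_power_rpar_le:
  assumes m: "m > 0" and p: "prime p"
  shows "(2 * int (Mpar m)) ^ rpar m p \<le> int p"
proof -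
  define k where "k = 16 * m ^ 2"
  have k: "0 < k" using m by (simp add: k_def)
  have p2: "2 \<le> real p" using prime_ge_2_nat[OF p] by linarith
  have "2 * int (Mpar m) = 2 ^ k" using k by (simp add: Mpar_def k_def flip: power_Suc)
  hence "real_of_int ((2 * int (Mpar m)) ^ rpar m p) = 2 powr (real k * real (rpar m p))"
    by (simp add: power_mult powr_realpow flip: of_nat_mult)
  also have "\<dots> \<le> 2 powr log 2 (real p)"
  proof (intro powr_mono)
    have "beta m * ln (real p) / ln 2 = log 2 (real p) / real k"
      by (simp add: beta_def k_def log_def)
    moreover have "0 \<le> log 2 (real p) / real k" using p2 by simp
    ultimately have "real (rpar m p) \<le> log 2 (real p) / real k"
      unfolding rpar_def by (metis of_nat_floor)
    thus "real k * real (rpar m p) \<le> log 2 (real p)" using k by (simp add: field_simps)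
  qed simp
  also have "\<dots> = real p" using p2 by simp
  finally show ?thesis by linarith
qed

lemma calB_bound:
  assumes "m > 0" "prime p" "b \<in> calB m p"
  shows "0 \<le> b \<and> 2 * b < int p"
  using digit_set_bound[of b "Mpar m" "rpar m p"] two_Mpar_power_rpar_le[OF assms(1,2)] assms(3)
  by (simp add: calB_eq_digit_set)

lemma Mpar_powr_le:
  assumes "m > 0"
  shows "real (Mpar m) powr (1 / (20 * real m ^ 2)) \<le> 7/4"
proof -
  have "real (Mpar m) powr (1 / (20 * real m ^ 2)) = 2 powr (real (16 * m ^ 2 - 1) / (20 * real m ^ 2))"
    by (simp add: Mpar_def powr_realpow[symmetric] powr_powr)
  also have "\<dots> \<le> 2 powr (4/5)"
    using assms by (intro powr_mono) (auto simp: of_nat_diff divide_le_eq)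
  also have "\<dots> \<le> 7/4"
  proof -
    have "(2 powr (4/5) :: real) ^ 5 = 16" by (simp add: powr_realpow[symmetric] powr_powr)
    also have "\<dots> \<le> (7/4) ^ 5" by (simp add: power_divide)
    finally show ?thesis by (subst (asm) power_mono_iff) auto
  qed
  finally show ?thesis .
qed

lemma card_diffset_mod:
  assumes B: "\<forall>b\<in>B. 0 \<le> b \<and> 2 * b < int p"
  shows "card (diffset_mod p B) = card (diff_set B B)"
proof -
  have "diffset_mod p B = (\<lambda>x. x mod int p) ` diff_set B B"
    unfolding diffset_mod_def diff_set_def by auto
  moreover have "inj_on (\<lambda>x. x mod int p) (diff_set B B)"
  proof (rule inj_onI)
    fix x y assume x: "x \<in> diff_set B B" and y: "y \<in> diff_set B B" and eq: "x mod int p = y mod int p"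
    obtain b1 b1' b2 b2' where "b1 \<in> B" "b1' \<in> B" "x = b1 - b1'" "b2 \<in> B" "b2' \<in> B" "y = b2 - b2'"
      using x y by (metis diff_setE)
    hence "\<bar>x - y\<bar> < int p" using B[rule_format, of b1] B[rule_format, of b1'] B[rule_format, of b2]
        B[rule_format, of b2'] by linarith
    moreover have "int p dvd (x - y)" using eq by (simp add: mod_eq_dvd_iff)
    ultimately show "x = y" using dvd_imp_le_int[of "x - y" "int p"] by linarith
  qed
  ultimately show ?thesis by (simp add: card_image)
qed

theorem corollary3:
  fixes m p :: nat and B :: "int set"
  assumes "m > 0" and "prime p"
    and "B \<subseteq> calB m p"
    and "real (card B) > real p powr (1/4)"
  shows "real (card (diffset_mod p B)) \<ge> real p powr (beta m / 5) * real (card B)"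
proof -
  define d where "d = 1 / (20 * real m ^ 2)"
  have d: "0 < d" "d \<le> 1/20" using assms(1) by (auto simp: d_def field_simps)
  have c: "0 < real (card B)" using assms(4) powr_ge_zero[of "real p" "1/4"] by linarith
  have "real p powr (beta m / 5) * real (card B) = (real p powr (1/4)) powr d * real (card B)"
    by (simp add: powr_powr beta_def d_def field_simps)
  also have "\<dots> \<le> real (card B) powr d * real (card B)"
    using assms(4) c d by (intro mult_right_mono powr_mono2) auto
  also have "\<dots> = (real (card B) * real (card B)) powr ((1 + d) / 2)"
    using c by (rule powr_mult_self_half[symmetric])
  also have "\<dots> \<le> real (card (diff_set B B))"
    using assms(3) c d Mpar_powr_le[OF assms(1)]
    by (intro card_diff_set_digit_set_ge) (auto simp: calB_eq_digit_set Mpar_def d_def)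
  also have "\<dots> = real (card (diffset_mod p B))"
    using assms(3) calB_bound[OF assms(1,2)] by (subst card_diffset_mod) auto
  finally show ?thesis .
qed

end
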